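(* Fix an integer $p\ge 2$ and let $x_0,x_1,x_2,\dots$ be the standard generators of the Brown–Thompson group $F_p$. In the group algebra $\mathbb{C}[F_p]$ set $$a_n:=\frac{x_n+x_n^{-1}}{\sqrt 2},\qquad s_n:=\frac{a_0+a_1+\dots+a_{n-1}}{\sqrt n}\quad(n\ge 1).$$ Then for every $d\in\mathbb N$, $$\lim_{n\to\infty}\gamma(s_n^d)=\begin{cases}(d-1)!! & d \text{ even},\\ 0 & d \text{ odd},\end{cases}$$ i.e. the moments of $s_n$ with respect to $\gamma$ converge to those of the standard normal distribution $N(0,1)$, so $s_n$ converges in distribution to a standard normal random variable.
   Context: $F_p$ is the group with presentation $\langle x_0,x_1,\dots \mid x_nx_k=x_kx_{n+p-1}\ \text{for all } k<n\rangle$, with identity $e$. The canonical trace $\gamma:\mathbb{C}[F_p]\to\mathbb{C}$ is the linear functional with $\gamma(g)=\delta_{g,e}$ for $g\in F_p$. For $d$ even, $(d-1)!!=(d-1)(d-3)\cdots 3\cdot 1$. *)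

theory Defs
  imports Complex_Main
begin

text \<open>Words in the generators: (n, True) is x_n, (n, False) is x_n inverse.\<close>
type_synonym fword = "(nat \<times> bool) list"

text \<open>One-step rewriting generating the congruence of the presentation of F_p
  (free cancellation and the defining relations x_n x_k = x_k x_(n+p-1), k < n).\<close>
inductive fp_step :: "nat \<Rightarrow> fword \<Rightarrow> fword \<Rightarrow> bool" for p where
  cancel: "fp_step p (u @ [(i, b), (i, \<not> b)] @ v) (u @ v)"
| rel: "k < n \<Longrightarrow> fp_step p (u @ [(n, True), (k, True)] @ v) (u @ [(k, True), (n + p - 1, True)] @ v)"

definition fp_eq :: "nat \<Rightarrow> fword \<Rightarrow> fword \<Rightarrow> bool" where
  "fp_eq p = (sup (fp_step p) (fp_step p)\<inverse>\<inverse>)\<^sup>*\<^sup>*"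

text \<open>Elements of F_p are equivalence classes of words.\<close>
definition fp_class :: "nat \<Rightarrow> fword \<Rightarrow> fword set" where
  "fp_class p w = {v. fp_eq p w v}"

definition fp_mult :: "nat \<Rightarrow> fword set \<Rightarrow> fword set \<Rightarrow> fword set" where
  "fp_mult p A B = fp_class p ((SOME a. a \<in> A) @ (SOME b. b \<in> B))"

text \<open>Group algebra C[F_p]: finitely supported complex functions on F_p
  (addition and scalar multiplication pointwise, product = convolution).\<close>
type_synonym fgalg = "fword set \<Rightarrow> complex"

definition fp_basis :: "nat \<Rightarrow> fword \<Rightarrow> fgalg" where
  "fp_basis p w = (\<lambda>C. if C = fp_class p w then 1 else 0)"

definition fp_conv :: "nat \<Rightarrow> fgalg \<Rightarrow> fgalg \<Rightarrow> fgalg" where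
  "fp_conv p f g = (\<lambda>C. \<Sum>A\<in>{A. f A \<noteq> 0}. \<Sum>B\<in>{B. g B \<noteq> 0}.
      if fp_mult p A B = C then f A * g B else 0)"

fun fp_pow :: "nat \<Rightarrow> fgalg \<Rightarrow> nat \<Rightarrow> fgalg" where
  "fp_pow p f 0 = fp_basis p []"
| "fp_pow p f (Suc m) = fp_conv p f (fp_pow p f m)"

text \<open>Canonical trace: coefficient of the identity.\<close>
definition fp_trace :: "nat \<Rightarrow> fgalg \<Rightarrow> complex" where
  "fp_trace p f = f (fp_class p [])"

definition fp_a :: "nat \<Rightarrow> nat \<Rightarrow> fgalg" where
  "fp_a p n = (\<lambda>C. (fp_basis p [(n, True)] C + fp_basis p [(n, False)] C) / complex_of_real (sqrt 2))"

definition fp_s :: "nat \<Rightarrow> nat \<Rightarrow> fgalg" where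
  "fp_s p n = (\<lambda>C. (\<Sum>i<n. fp_a p i C) / complex_of_real (sqrt (real n)))"

fun dfact :: "nat \<Rightarrow> nat" where
  "dfact 0 = 1"
| "dfact (Suc 0) = 1"
| "dfact (Suc (Suc n)) = Suc (Suc n) * dfact n"

end

theory Submission
  imports Defs "HOL-Library.Stream"
begin

text \<open>Expanding s_n^d, the trace gamma(s_n^d) is (2n)^(-d/2) times the number of words of length d
  in the letters x_i^(+1), x_i^(-1) (i < n) that are trivial in F_p. Trivial words have even
  length, so odd moments vanish. In a trivial word of length 2m whose smallest generator is x_a,
  the exponent sum of x_a is 0 (seen through the action of F_p on p-ary sequences); hence the word
  contains x_a^(-1) v x_a with all letters of v above x_a, or it is u x_a v x_a^(-1) t with all
  letters of u and t above x_a. Conjugation by x_a raises indices above a by p - 1, so deleting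
  this pair leaves a trivial word of length 2m - 2; conversely, inserting such a pair into a
  trivial word whose letters are all above x_(a+p-1) gives distinct trivial words. Induction on m
  yields 2^m (2m-1)!! (n - mp)^m \<le> #trivial words \<le> 2^m (2m-1)!! (n + mp)^m, and dividing by
  (2n)^m gives the limit (2m-1)!!.\<close>

section \<open>Equality of words in F_p\<close>

lemma fp_eq_equivclp: "fp_eq p = equivclp (fp_step p)"
  by (simp add: fp_eq_def equivclp_def symclp_pointfree)

lemma fp_eq_refl [simp]: "fp_eq p w w"
  by (simp add: fp_eq_equivclp)

lemma fp_eq_sym [sym]: "fp_eq p u v \<Longrightarrow> fp_eq p v u"
  by (simp add: fp_eq_equivclp equivclp_sym)

lemma fp_eq_trans [trans]: "fp_eq p u v \<Longrightarrow> fp_eq p v w \<Longrightarrow> fp_eq p u w"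
  unfolding fp_eq_equivclp by (rule equivclp_trans)

lemma fp_eq_invariant:
  assumes "fp_eq p u v" and "\<And>u v. fp_step p u v \<Longrightarrow> f u = f v"
  shows "f u = f v"
  using assms(1) unfolding fp_eq_equivclp
  by (induction rule: equivclp_induct) (use assms(2) in metis)+

lemma fp_step_context: "fp_step p u v \<Longrightarrow> fp_step p (x @ u @ y) (x @ v @ y)"
proof (induction rule: fp_step.induct)
  case (cancel u i b v)
  show ?case using fp_step.cancel[of p "x @ u" i b "v @ y"] by simp
next
  case (rel k n u v)
  show ?case using fp_step.rel[OF rel, of p "x @ u" "v @ y"] by simp
qed

lemma fp_eq_context: "fp_eq p u v \<Longrightarrow> fp_eq p (x @ u @ y) (x @ v @ y)"
  unfolding fp_eq_equivclp
  by (induction rule: equivclp_induct) (auto intro: equivclp_into_equivclp fp_step_context)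

lemma fp_eq_append: "fp_eq p u u' \<Longrightarrow> fp_eq p v v' \<Longrightarrow> fp_eq p (u @ v) (u' @ v')"
  using fp_eq_context[of p u u' "[]" v] fp_eq_context[of p v v' u' "[]"] by (auto intro: fp_eq_trans)

lemma fp_eq_cancel: "fp_eq p [(i, b), (i, \<not> b)] []"
  using fp_step.cancel[of p "[]" i b "[]"] by (auto simp: fp_eq_equivclp)

lemma fp_eq_rel: "k < n \<Longrightarrow> fp_eq p [(n, True), (k, True)] [(k, True), (n + p - 1, True)]"
  using fp_step.rel[of k n p "[]" "[]"] by (auto simp: fp_eq_equivclp)

lemma fp_eq_even_length: "fp_eq p u v \<Longrightarrow> even (length u) \<longleftrightarrow> even (length v)"
  by (erule fp_eq_invariant[where f = "\<lambda>w. even (length w)"]) (auto elim!: fp_step.cases)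

lemma fp_class_eq_iff: "fp_class p u = fp_class p v \<longleftrightarrow> fp_eq p u v"
  unfolding fp_class_def using fp_eq_refl fp_eq_sym fp_eq_trans by blast

lemma fp_mult_class: "fp_mult p (fp_class p u) (fp_class p v) = fp_class p (u @ v)"
proof -
  have "fp_eq p u (SOME u'. u' \<in> fp_class p u)" "fp_eq p v (SOME v'. v' \<in> fp_class p v)"
    by (metis fp_class_def fp_eq_refl mem_Collect_eq someI)+
  then have "fp_eq p (u @ v) ((SOME u'. u' \<in> fp_class p u) @ (SOME v'. v' \<in> fp_class p v))"
    by (rule fp_eq_append)
  then show ?thesis
    unfolding fp_mult_def fp_class_eq_iff by (rule fp_eq_sym)
qed

section \<open>Exponent sums of the smallest generator\<close>

text \<open>F_p acts on infinite sequences of digits 0, ..., p - 1 (the ends of the rooted p-ary tree)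
  through the tree diagrams of its generators: x_i with i < p - 1 acts near the root as
  root_gen p i, and x_(q(p-1)+r) acts as x_r below the prefix (p-1)^q and trivially elsewhere.\<close>

definition root_gen :: "nat \<Rightarrow> nat \<Rightarrow> nat stream \<Rightarrow> nat stream" where
  "root_gen p i s = (case s of t ## s' \<Rightarrow> if t < i then s else if t \<le> p - 2 then i ## (t - i) ## s'
      else (case s' of c ## s'' \<Rightarrow> if c \<le> i then i ## (p - 1 - i + c) ## s'' else c ## s''))"

definition root_gen_inv :: "nat \<Rightarrow> nat \<Rightarrow> nat stream \<Rightarrow> nat stream" where
  "root_gen_inv p i s = (case s of t ## s' \<Rightarrow> if t < i then s else if t = i then
      (case s' of c ## s'' \<Rightarrow> if c + i \<le> p - 2 then (i + c) ## s'' else (p - 1) ## (c + i + 1 - p) ## s'')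
      else (p - 1) ## s)"

definition p_ary :: "nat \<Rightarrow> nat stream \<Rightarrow> bool" where
  "p_ary p s \<longleftrightarrow> (\<forall>x\<in>sset s. x < p)"

primrec descend :: "nat \<Rightarrow> nat \<Rightarrow> (nat stream \<Rightarrow> nat stream) \<Rightarrow> nat stream \<Rightarrow> nat stream" where
  "descend p 0 f s = f s"
| "descend p (Suc q) f s = (case s of t ## s' \<Rightarrow> if t = p - 1 then t ## descend p q f s' else s)"

definition act_letter :: "nat \<Rightarrow> nat \<times> bool \<Rightarrow> nat stream \<Rightarrow> nat stream" where
  "act_letter p l = descend p (fst l div (p - 1))
     (if snd l then root_gen p (fst l mod (p - 1)) else root_gen_inv p (fst l mod (p - 1)))"

primrec act_word :: "nat \<Rightarrow> fword \<Rightarrow> nat stream \<Rightarrow> nat stream" where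
  "act_word p [] = id"
| "act_word p (l # w) = act_letter p l \<circ> act_word p w"

lemma act_word_append [simp]: "act_word p (u @ v) = act_word p u \<circ> act_word p v"
  by (induction u) auto

lemma p_ary_SCons [simp]: "p_ary p (x ## s) \<longleftrightarrow> x < p \<and> p_ary p s"
  by (auto simp: p_ary_def)

lemma root_gen_inverse:
  assumes "2 \<le> p" "i < p - 1" "p_ary p s"
  shows "root_gen_inv p i (root_gen p i s) = s" "root_gen p i (root_gen_inv p i s) = s"
    "p_ary p (root_gen p i s)" "p_ary p (root_gen_inv p i s)"
proof -
  obtain t c s' where "s = t ## c ## s'" by (metis stream.collapse)
  then show "root_gen_inv p i (root_gen p i s) = s" "root_gen p i (root_gen_inv p i s) = s"
    "p_ary p (root_gen p i s)" "p_ary p (root_gen_inv p i s)"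
    using assms by (auto simp: root_gen_def root_gen_inv_def)
qed

lemma descend_p_ary:
  "(\<And>s. p_ary p s \<Longrightarrow> p_ary p (f s)) \<Longrightarrow> p_ary p s \<Longrightarrow> p_ary p (descend p q f s)"
  by (induction q arbitrary: s) (auto split: stream.split)

lemma descend_inverse:
  "(\<And>s. p_ary p s \<Longrightarrow> f (g s) = s) \<Longrightarrow> (\<And>s. p_ary p s \<Longrightarrow> p_ary p (g s)) \<Longrightarrow> p_ary p s \<Longrightarrow>
   descend p q f (descend p q g s) = s"
  by (induction q arbitrary: s) (auto split: stream.split)

lemma descend_one_SCons [simp]:
  "descend p 1 f (t ## s) = (if t = p - 1 then t ## f s else t ## s)"
  by (simp add: One_nat_def)

lemma act_letter_root:
  "j < p - 1 \<Longrightarrow> act_letter p (j, b) = (if b then root_gen p j else root_gen_inv p j)"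
  by (simp add: act_letter_def fun_eq_iff)

lemma act_letter_descend:
  assumes "2 \<le> p" "p - 1 \<le> j"
  shows "act_letter p (j, b) = descend p 1 (act_letter p (j - (p - 1), b))"
proof -
  have "j div (p - 1) = Suc ((j - (p - 1)) div (p - 1))" "j mod (p - 1) = (j - (p - 1)) mod (p - 1)"
    using assms by (auto simp: le_div_geq le_mod_geq)
  then show ?thesis by (auto simp: act_letter_def fun_eq_iff split: stream.split)
qed

lemma act_letter_p_ary: "2 \<le> p \<Longrightarrow> p_ary p s \<Longrightarrow> p_ary p (act_letter p l s)"
  unfolding act_letter_def by (rule descend_p_ary) (auto intro: root_gen_inverse)

lemma act_word_p_ary: "2 \<le> p \<Longrightarrow> p_ary p s \<Longrightarrow> p_ary p (act_word p w s)"
  by (induction w) (auto intro: act_letter_p_ary)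

lemma act_letter_cancel: "2 \<le> p \<Longrightarrow> p_ary p s \<Longrightarrow> act_letter p (i, b) (act_letter p (i, \<not> b) s) = s"
  unfolding act_letter_def by (cases b) (auto intro!: descend_inverse intro: root_gen_inverse)

lemma root_gen_descend_commute:
  assumes "2 \<le> p" "k < p - 1" "p_ary p s"
  shows "root_gen p k (descend p 1 (descend p 1 f) s) = descend p 1 f (root_gen p k s)"
proof -
  obtain t c s' where "s = t ## c ## s'" by (metis stream.collapse)
  then show ?thesis using assms by (auto simp: root_gen_def)
qed

lemma root_gen_rel:
  assumes "2 \<le> p" "k < n" "n < p - 1" "p_ary p s"
  shows "root_gen p n (root_gen p k s) = root_gen p k (descend p 1 (root_gen p n) s)"
proof -
  obtain t c d s' where "s = t ## c ## d ## s'" by (metis stream.collapse)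
  then show ?thesis using assms by (auto simp: root_gen_def)
qed

lemma act_letter_rel:
  assumes "2 \<le> p" "k < n" "p_ary p s"
  shows "act_letter p (n, True) (act_letter p (k, True) s) =
    act_letter p (k, True) (act_letter p (n + p - 1, True) s)"
  using assms(2,3)
proof (induction k arbitrary: n s rule: less_induct)
  case (less k)
  have shifted: "act_letter p (n + p - 1, True) = descend p 1 (act_letter p (n, True))"
    using act_letter_descend[OF assms(1), of "n + p - 1"] assms(1) by simp
  show ?case
  proof (cases "p - 1 \<le> k")
    case True
    obtain t s' where s: "s = t ## s'" by (metis stream.collapse)
    moreover have "act_letter p (n - (p - 1), True) (act_letter p (k - (p - 1), True) s') =
      act_letter p (k - (p - 1), True) (act_letter p (n - (p - 1) + p - 1, True) s')"
      using less True assms(1) s by (intro less.IH) auto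
    moreover have "n - (p - 1) + p - 1 - (p - 1) = n - (p - 1)"
      using True less.prems assms(1) by simp
    ultimately show ?thesis
      using True less.prems assms(1) act_letter_descend[OF assms(1)]
      by (simp add: shifted)
  next
    case False
    then have k: "act_letter p (k, True) = root_gen p k" by (simp add: act_letter_root)
    show ?thesis
    proof (cases "p - 1 \<le> n")
      case True
      then have n: "act_letter p (n, True) = descend p 1 (act_letter p (n - (p - 1), True))"
        by (rule act_letter_descend[OF assms(1)])
      show ?thesis
        unfolding k shifted n using False less.prems(2)
        by (intro root_gen_descend_commute[symmetric] assms(1)) auto
    next
      case nF: False
      then have n: "act_letter p (n, True) = root_gen p n" by (simp add: act_letter_root)
      show ?thesis
        unfolding k shifted n using less.prems nF by (intro root_gen_rel assms(1)) auto
    qed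
  qed
qed

lemma act_word_fp_eq:
  assumes "fp_eq p u v" "2 \<le> p" "p_ary p s"
  shows "act_word p u s = act_word p v s"
  using assms(1)
proof (rule fp_eq_invariant[where f = "\<lambda>w. act_word p w s"])
  fix u v assume "fp_step p u v"
  then show "act_word p u s = act_word p v s"
    by induction (use assms(2,3) in \<open>simp_all add: act_letter_cancel act_letter_rel act_word_p_ary\<close>)
qed

definition exp_sum :: "nat \<Rightarrow> fword \<Rightarrow> int" where
  "exp_sum a w = (\<Sum>l\<leftarrow>w. if fst l = a then (if snd l then 1 else -1) else 0)"

lemma exp_sum_simps [simp]:
  "exp_sum a [] = 0"
  "exp_sum a (l # w) = (if fst l = a then (if snd l then 1 else -1) else 0) + exp_sum a w"
  "exp_sum a (u @ v) = exp_sum a u + exp_sum a v"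
  by (simp_all add: exp_sum_def)

lemma abs_exp_sum_le: "\<bar>exp_sum a w\<bar> \<le> int (length w)"
  by (induction w) auto

text \<open>Letters x_j with j > a fix the point probe p a N and x_a moves it from N to N + 1, so the
  exponent sum of x_a in a word with letters x_a, x_(a+1), ... can be read off from its action.\<close>

definition probe :: "nat \<Rightarrow> nat \<Rightarrow> nat \<Rightarrow> nat stream" where
  "probe p a N =
     replicate (a div (p - 1)) (p - 1) @- ((a mod (p - 1)) ## (replicate N 0 @- (1 ## sconst 0)))"

lemma descend_replicate: "descend p q f (replicate q (p - 1) @- s) = replicate q (p - 1) @- f s"
  by (induction q) auto

lemma descend_replicate_off:
  "q < q' \<Longrightarrow> r \<noteq> p - 1 \<Longrightarrow> descend p q' f (replicate q (p - 1) @- (r ## s)) = replicate q (p - 1) @- (r ## s)"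
proof (induction q arbitrary: q')
  case 0
  then show ?case by (cases q') auto
next
  case (Suc q)
  then show ?case by (cases q') auto
qed

lemma div_mod_less_lex:
  fixes a j D :: nat
  assumes "a < j"
  shows "a div D < j div D \<or> (a div D = j div D \<and> a mod D < j mod D)"
proof -
  have "a div D \<le> j div D" using assms by (simp add: div_le_mono)
  moreover have "a mod D < j mod D" if "a div D = j div D"
    using assms that div_mult_mod_eq[of a D] div_mult_mod_eq[of j D] by (metis add_less_cancel_left)
  ultimately show ?thesis by linarith
qed

lemma mod_pred_less: "2 \<le> p \<Longrightarrow> a mod (p - 1) < (p - 1 :: nat)"
  by simp

lemma probe_p_ary:
  assumes "2 \<le> p"
  shows "p_ary p (probe p a N)"
  using mod_pred_less[OF assms, of a] by (auto simp: probe_def p_ary_def)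

lemma act_letter_probe_larger:
  assumes "2 \<le> p" "a < j"
  shows "act_letter p (j, b) (probe p a N) = probe p a N"
  using div_mod_less_lex[OF assms(2), of "p - 1"]
proof
  assume "a div (p - 1) < j div (p - 1)"
  then show ?thesis
    unfolding act_letter_def probe_def using mod_pred_less[OF assms(1), of a]
    by (intro descend_replicate_off) auto
next
  assume "a div (p - 1) = j div (p - 1) \<and> a mod (p - 1) < j mod (p - 1)"
  then have same_div: "j div (p - 1) = a div (p - 1)" and "a mod (p - 1) < j mod (p - 1)" by simp_all
  then show ?thesis
    unfolding act_letter_def probe_def fst_conv snd_conv same_div descend_replicate
    by (simp add: root_gen_def root_gen_inv_def)
qed

lemma act_letter_probe:
  assumes "2 \<le> p"
  shows "act_letter p (a, True) (probe p a N) = probe p a (Suc N)"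
    "act_letter p (a, False) (probe p a (Suc N)) = probe p a N"
proof -
  have "a mod (p - 1) \<le> p - 2" using mod_pred_less[OF assms, of a] by linarith
  then show "act_letter p (a, True) (probe p a N) = probe p a (Suc N)"
    "act_letter p (a, False) (probe p a (Suc N)) = probe p a N"
    unfolding act_letter_def probe_def fst_conv snd_conv descend_replicate
    by (simp_all add: root_gen_def root_gen_inv_def)
qed

lemma probe_inj: "probe p a N = probe p a M \<Longrightarrow> N = M"
proof (rule ccontr)
  have differ: "(replicate N 0 @- (1 ## sconst 0)) !! N \<noteq> (replicate M 0 @- (1 ## sconst (0::nat))) !! N"
    if "N < M" for N M :: nat
    using that by simp
  assume "probe p a N = probe p a M" "N \<noteq> M"
  then show False
    using differ[of N M] differ[of M N] by (auto simp: probe_def dest: linorder_neqE_nat)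
qed

lemma act_word_probe:
  assumes "2 \<le> p" "\<forall>l\<in>set w. a \<le> fst l" "length w \<le> N"
  shows "act_word p w (probe p a N) = probe p a (nat (int N + exp_sum a w))"
  using assms(2,3)
proof (induction w arbitrary: N)
  case Nil
  then show ?case by simp
next
  case (Cons l w)
  obtain j b where l: "l = (j, b)" by (cases l)
  have IH: "act_word p w (probe p a N) = probe p a (nat (int N + exp_sum a w))"
    using Cons by auto
  have pos: "int N + exp_sum a w \<ge> 1"
    using abs_exp_sum_le[of a w] Cons.prems by auto
  show ?case
  proof (cases "j = a")
    case True
    then show ?thesis
    proof (cases b)
      case True
      have "nat (int N + exp_sum a (l # w)) = Suc (nat (int N + exp_sum a w))"
        using pos \<open>j = a\<close> True l by simp
      then show ?thesis using IH act_letter_probe(1)[OF assms(1)] \<open>j = a\<close> True l by simp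
    next
      case False
      have "nat (int N + exp_sum a w) = Suc (nat (int N + exp_sum a (l # w)))"
        using pos \<open>j = a\<close> False l by simp
      then show ?thesis using IH act_letter_probe(2)[OF assms(1)] \<open>j = a\<close> False l by simp
    qed
  next
    case False
    then have "a < j" using Cons.prems l by auto
    then show ?thesis using IH act_letter_probe_larger[OF assms(1)] False l by simp
  qed
qed

theorem exp_sum_min_gen_eq_0:
  assumes "2 \<le> p" "fp_eq p w []" "\<forall>l\<in>set w. a \<le> fst l"
  shows "exp_sum a w = 0"
proof -
  have "probe p a (nat (int (length w) + exp_sum a w)) = probe p a (length w)"
    using act_word_fp_eq[OF assms(2,1) probe_p_ary[OF assms(1)]] act_word_probe[OF assms(1,3)] by simp
  then have "nat (int (length w) + exp_sum a w) = length w" by (rule probe_inj)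
  then show ?thesis using abs_exp_sum_le[of a w] by linarith
qed

section \<open>Conjugation by a generator\<close>

definition shift_word :: "nat \<Rightarrow> fword \<Rightarrow> fword" where
  "shift_word p = map (\<lambda>l. (fst l + (p - 1), snd l))"

definition unshift_word :: "nat \<Rightarrow> fword \<Rightarrow> fword" where
  "unshift_word p = map (\<lambda>l. (fst l - (p - 1), snd l))"

lemma shift_word_simps [simp]:
  "shift_word p [] = []" "shift_word p (l # w) = (fst l + (p - 1), snd l) # shift_word p w"
  "shift_word p (u @ v) = shift_word p u @ shift_word p v" "length (shift_word p w) = length w"
  by (simp_all add: shift_word_def)

lemma unshift_word_simps [simp]:
  "unshift_word p (u @ v) = unshift_word p u @ unshift_word p v" "length (unshift_word p w) = length w"
  by (simp_all add: unshift_word_def)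

lemma unshift_shift_word [simp]: "unshift_word p (shift_word p w) = w"
  by (simp add: shift_word_def unshift_word_def comp_def)

lemma shift_unshift_word: "\<forall>l\<in>set w. p - 1 \<le> fst l \<Longrightarrow> shift_word p (unshift_word p w) = w"
  by (induction w) (auto simp: shift_word_def unshift_word_def)

lemma fp_eq_conj_gen:
  assumes "2 \<le> p" "a < j"
  shows "fp_eq p [(a, False), (j, b), (a, True)] [(j + p - 1, b)]"
proof (cases b)
  case True
  have "fp_eq p [(a, False), (j, True), (a, True)] [(a, False), (a, True), (j + p - 1, True)]"
    using fp_eq_context[OF fp_eq_rel[OF assms(2)], of p "[(a, False)]" "[]"] by simp
  also have "fp_eq p \<dots> [(j + p - 1, True)]"
    using fp_eq_context[OF fp_eq_cancel[of p a False], of "[]" "[(j + p - 1, True)]"] by simp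
  finally show ?thesis using True by simp
next
  case False
  let ?J = "j + p - 1"
  have "fp_eq p [(a, False), (j, False), (a, True)]
      [(a, False), (j, False), (a, True), (?J, True), (?J, False)]"
    using fp_eq_sym[OF fp_eq_context[OF fp_eq_cancel[of p ?J True], of "[(a, False), (j, False), (a, True)]" "[]"]]
    by simp
  also have "fp_eq p \<dots> [(a, False), (j, False), (j, True), (a, True), (?J, False)]"
    using fp_eq_sym[OF fp_eq_context[OF fp_eq_rel[OF assms(2), of p], of "[(a, False), (j, False)]" "[(?J, False)]"]]
    by simp
  also have "fp_eq p \<dots> [(a, False), (a, True), (?J, False)]"
    using fp_eq_context[OF fp_eq_cancel[of p j False], of "[(a, False)]" "[(a, True), (?J, False)]"] by simp
  also have "fp_eq p \<dots> [(?J, False)]"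
    using fp_eq_context[OF fp_eq_cancel[of p a False], of "[]" "[(?J, False)]"] by simp
  finally show ?thesis using False by simp
qed

lemma fp_eq_conj_word:
  assumes "2 \<le> p" "\<forall>l\<in>set v. a < fst l"
  shows "fp_eq p ([(a, False)] @ v @ [(a, True)]) (shift_word p v)"
  using assms(2)
proof (induction v)
  case Nil
  then show ?case using fp_eq_cancel[of p a False] by simp
next
  case (Cons l v)
  have "fp_eq p ([(a, False), l] @ v @ [(a, True)]) ([(a, False), l, (a, True)] @ [(a, False)] @ v @ [(a, True)])"
    using fp_eq_sym[OF fp_eq_context[OF fp_eq_cancel[of p a True], of "[(a, False), l]" "v @ [(a, True)]"]]
    by simp
  also have "fp_eq p \<dots> ([(fst l + (p - 1), snd l)] @ shift_word p v)"
    using Cons assms(1) fp_eq_conj_gen[of p a "fst l" "snd l"] by (intro fp_eq_append) auto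
  finally show ?case by simp
qed

lemma fp_eq_Nil_conj_iff: "fp_eq p ([(a, False)] @ w @ [(a, True)]) [] \<longleftrightarrow> fp_eq p w []"
proof
  assume "fp_eq p w []"
  then have "fp_eq p ([(a, False)] @ w @ [(a, True)]) ([(a, False)] @ [] @ [(a, True)])"
    by (rule fp_eq_context)
  then show "fp_eq p ([(a, False)] @ w @ [(a, True)]) []"
    using fp_eq_cancel[of p a False] by (auto intro: fp_eq_trans)
next
  assume conj: "fp_eq p ([(a, False)] @ w @ [(a, True)]) []"
  have unit: "fp_eq p [] [(a, True), (a, False)]"
    using fp_eq_sym[OF fp_eq_cancel[of p a True]] by simp
  have "fp_eq p w ([(a, True)] @ ([(a, False)] @ w @ [(a, True)]) @ [(a, False)])"
    using fp_eq_append[OF unit fp_eq_append[OF fp_eq_refl unit, of w]] by simp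
  also have "fp_eq p \<dots> ([(a, True)] @ [] @ [(a, False)])"
    using conj by (rule fp_eq_context)
  also have "fp_eq p \<dots> []"
    using fp_eq_cancel[of p a True] by simp
  finally show "fp_eq p w []" .
qed

lemma fp_eq_Nil_outer_pair_iff:
  assumes "2 \<le> p" "\<forall>l\<in>set u. a < fst l" "\<forall>l\<in>set t. a < fst l"
  shows "fp_eq p (u @ [(a, True)] @ v @ [(a, False)] @ t) [] \<longleftrightarrow>
    fp_eq p (shift_word p u @ v @ shift_word p t) []"
proof -
  have conj: "fp_eq p ([(a, False)] @ (u @ [(a, True)] @ v @ [(a, False)] @ t) @ [(a, True)])
      (shift_word p u @ v @ shift_word p t)"
    using fp_eq_append[OF fp_eq_conj_word[OF assms(1,2)]
        fp_eq_append[OF fp_eq_refl[of p v] fp_eq_conj_word[OF assms(1,3)]]]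
    by simp
  then show ?thesis
    using fp_eq_Nil_conj_iff[of p a "u @ [(a, True)] @ v @ [(a, False)] @ t"]
      fp_eq_trans[OF conj] fp_eq_trans[OF fp_eq_sym[OF conj]]
    by blast
qed

section \<open>Decomposition of trivial words\<close>

lemma filter_eq_snocD:
  assumes "filter P ys = xs @ [x]"
  shows "\<exists>us vs. ys = us @ x # vs \<and> (\<forall>v\<in>set vs. \<not> P v) \<and> P x \<and> xs = filter P us"
proof -
  have "filter P (rev ys) = x # rev xs" using assms by (simp flip: rev_filter)
  then obtain zs zs' where "rev ys = zs @ x # zs'" "\<forall>z\<in>set zs. \<not> P z" "P x" "rev xs = filter P zs'"
    by (blast dest: filter_eq_ConsD)
  moreover from this(1,4) have "ys = rev zs' @ x # rev zs" "xs = filter P (rev zs')"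
    by (metis rev_rev_ident rev.simps(2) rev_append append.assoc append_Cons append_Nil,
        metis rev_rev_ident rev_filter)
  ultimately have "ys = rev zs' @ x # rev zs" "\<forall>z\<in>set (rev zs). \<not> P z" "P x" "xs = filter P (rev zs')"
    by simp_all
  then show ?thesis by blast
qed

lemma exp_sum_filter:
  "exp_sum a w = (\<Sum>b\<leftarrow>map snd (filter (\<lambda>l. fst l = a) w). if b then 1 else -1)"
  by (induction w) auto

lemma inner_pair_or_sorted:
  "(\<exists>u v t. w = u @ [(a, False)] @ v @ [(a, True)] @ t \<and> (\<forall>l\<in>set v. fst l \<noteq> a)) \<or>
   (\<exists>k l. map snd (filter (\<lambda>l. fst l = a) w) = replicate k True @ replicate l False)"
proof (induction w)
  case Nil
  have "map snd (filter (\<lambda>l. fst l = a) []) = replicate 0 True @ replicate 0 False" by simp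
  then show ?case by blast
next
  case (Cons x w)
  from Cons.IH show ?case
  proof (elim disjE exE conjE)
    fix u v t assume "w = u @ [(a, False)] @ v @ [(a, True)] @ t" "\<forall>l\<in>set v. fst l \<noteq> a"
    then have "x # w = (x # u) @ [(a, False)] @ v @ [(a, True)] @ t" "\<forall>l\<in>set v. fst l \<noteq> a" by simp_all
    then show ?case by blast
  next
    fix k l assume signs: "map snd (filter (\<lambda>l. fst l = a) w) = replicate k True @ replicate l False"
    consider "fst x \<noteq> a" | "x = (a, True)" | "x = (a, False)" "k = 0" | "x = (a, False)" "0 < k"
      by (cases x) auto
    then show ?case
    proof cases
      case 1
      then show ?thesis using signs by auto
    next
      case 2
      then have "map snd (filter (\<lambda>l. fst l = a) (x # w)) = replicate (Suc k) True @ replicate l False"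
        using signs by simp
      then show ?thesis by blast
    next
      case 3
      then have "map snd (filter (\<lambda>l. fst l = a) (x # w)) = replicate 0 True @ replicate (Suc l) False"
        using signs by simp
      then show ?thesis by blast
    next
      case 4
      then obtain y ys where f: "filter (\<lambda>l. fst l = a) w = y # ys" and "snd y"
        using signs by (cases "filter (\<lambda>l. fst l = a) w"; cases k) auto
      from filter_eq_ConsD[OF f] obtain us vs where
        "w = us @ y # vs" "\<forall>l\<in>set us. fst l \<noteq> a" "fst y = a"
        by blast
      moreover from \<open>snd y\<close> \<open>fst y = a\<close> have "y = (a, True)" by (cases y) simp
      ultimately have "x # w = [] @ [(a, False)] @ us @ [(a, True)] @ vs" "\<forall>l\<in>set us. fst l \<noteq> a"
        using 4 by simp_all
      then show ?thesis by blast
    qed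
  qed
qed

lemma outer_pair_of_sorted_signs:
  assumes signs: "map snd (filter (\<lambda>l. fst l = a) w) = replicate k True @ replicate k False"
    and "0 < k"
  shows "\<exists>u v t. w = u @ [(a, True)] @ v @ [(a, False)] @ t \<and>
    (\<forall>l\<in>set u. fst l \<noteq> a) \<and> (\<forall>l\<in>set t. fst l \<noteq> a)"
proof -
  define f where "f = filter (\<lambda>l. fst l = a) w"
  have "length f = 2 * k" using arg_cong[OF signs, of length] by (simp add: f_def)
  then obtain x mid y where f: "f = x # mid @ [y]"
    using \<open>0 < k\<close> by (cases f; cases "tl f" rule: rev_cases) auto
  then have signs': "snd x # map snd mid @ [snd y] = replicate k True @ replicate k False"
    using signs unfolding f_def[symmetric] by simp
  then have "snd x" using \<open>0 < k\<close> by (cases k) simp_all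
  have "\<not> snd y" using arg_cong[OF signs', of last] \<open>0 < k\<close> by (simp add: last_append)
  from filter_eq_ConsD[OF f[unfolded f_def]] obtain u r where
    w: "w = u @ x # r" and u: "\<forall>l\<in>set u. fst l \<noteq> a" "fst x = a"
      and "mid @ [y] = filter (\<lambda>l. fst l = a) r"
    by blast
  then obtain v t where "r = v @ y # t" "\<forall>l\<in>set t. fst l \<noteq> a" "fst y = a"
    using filter_eq_snocD[of "\<lambda>l. fst l = a" r mid y] by auto
  moreover have "x = (a, True)" "y = (a, False)"
    using \<open>snd x\<close> \<open>\<not> snd y\<close> u(2) \<open>fst y = a\<close> by (auto intro: prod_eqI)
  ultimately have "w = u @ [(a, True)] @ v @ [(a, False)] @ t" "\<forall>l\<in>set t. fst l \<noteq> a"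
    using w by simp_all
  then show ?thesis using u(1) by blast
qed

lemma trivial_word_decomp:
  assumes "2 \<le> p" "fp_eq p w []" "\<forall>l\<in>set w. a \<le> fst l" "\<exists>l\<in>set w. fst l = a"
  shows "(\<exists>u v t. w = u @ [(a, False)] @ v @ [(a, True)] @ t \<and> (\<forall>l\<in>set v. a < fst l)) \<or>
    (\<exists>u v t. w = u @ [(a, True)] @ v @ [(a, False)] @ t \<and> (\<forall>l\<in>set u. a < fst l) \<and> (\<forall>l\<in>set t. a < fst l))"
proof -
  have above: "\<forall>l\<in>set x. a < fst l" if "set x \<subseteq> set w" "\<forall>l\<in>set x. fst l \<noteq> a" for x
    using that assms(3) by (auto intro: le_neq_implies_less)
  from inner_pair_or_sorted[of w a] show ?thesis
  proof (elim disjE exE conjE)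
    fix u v t
    assume w: "w = u @ [(a, False)] @ v @ [(a, True)] @ t" and "\<forall>l\<in>set v. fst l \<noteq> a"
    moreover have "set v \<subseteq> set w" using w by auto
    ultimately have "\<forall>l\<in>set v. a < fst l" using above by blast
    then show ?thesis using w by blast
  next
    fix k l assume signs: "map snd (filter (\<lambda>l. fst l = a) w) = replicate k True @ replicate l False"
    have "int k - int l = exp_sum a w"
      unfolding exp_sum_filter signs by (simp add: sum_list_replicate)
    then have "l = k" using exp_sum_min_gen_eq_0[OF assms(1-3)] by simp
    moreover have "filter (\<lambda>l. fst l = a) w \<noteq> []" using assms(4) by (auto simp: filter_empty_conv)
    ultimately have "0 < k" using signs by (cases k) auto
    from outer_pair_of_sorted_signs[OF signs[unfolded \<open>l = k\<close>] this] obtain u v t where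
      w: "w = u @ [(a, True)] @ v @ [(a, False)] @ t" and "\<forall>l\<in>set u. fst l \<noteq> a" "\<forall>l\<in>set t. fst l \<noteq> a"
      by blast
    moreover have "set u \<subseteq> set w" "set t \<subseteq> set w" using w by auto
    ultimately have "\<forall>l\<in>set u. a < fst l" "\<forall>l\<in>set t. a < fst l" using above by blast+
    then show ?thesis using w by blast
  qed
qed

section \<open>Counting trivial words\<close>

definition words :: "nat \<Rightarrow> nat \<Rightarrow> nat \<Rightarrow> fword set" where
  "words lo hi k = {w. length w = k \<and> (\<forall>l\<in>set w. lo \<le> fst l \<and> fst l < hi)}"

definition trivial_words :: "nat \<Rightarrow> nat \<Rightarrow> nat \<Rightarrow> nat \<Rightarrow> fword set" where
  "trivial_words p m lo hi = {w \<in> words lo hi (2 * m). fp_eq p w []}"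

definition trivial_words_with :: "nat \<Rightarrow> nat \<Rightarrow> nat \<Rightarrow> nat \<Rightarrow> fword set" where
  "trivial_words_with p m a hi = {w \<in> trivial_words p m a hi. \<exists>l\<in>set w. fst l = a}"

definition index_pairs :: "nat \<Rightarrow> (nat \<times> nat) set" where
  "index_pairs m = {(i, j). i < j \<and> j < 2 * m}"

text \<open>Insert x_a^(-1), x_a (inner = True) or x_a, x_a^(-1) (inner = False) at the positions i < j
  of a word, undoing the index shift that conjugation by x_a causes on the letters between them
  (inner pair) or outside them (outer pair).\<close>

fun insert_pair :: "nat \<Rightarrow> bool \<Rightarrow> nat \<Rightarrow> nat \<times> nat \<Rightarrow> fword \<Rightarrow> fword" where
  "insert_pair p inner a (i, j) w =
    (if inner then take i w @ [(a, False)] @ unshift_word p (take (j - 1 - i) (drop i w)) @ [(a, True)] @ drop (j - 1) w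
     else unshift_word p (take i w) @ [(a, True)] @ take (j - 1 - i) (drop i w) @ [(a, False)] @ unshift_word p (drop (j - 1) w))"

declare insert_pair.simps [simp del]

lemma finite_words: "finite (words lo hi k)"
proof (rule finite_subset)
  show "words lo hi k \<subseteq> {w. set w \<subseteq> {lo..<hi} \<times> UNIV \<and> length w = k}"
    by (auto simp: words_def)
qed (rule finite_lists_length_eq, simp)

lemma finite_trivial_words: "finite (trivial_words p m lo hi)"
  by (simp add: trivial_words_def finite_words)

lemma finite_index_pairs: "finite (index_pairs m)"
  by (rule finite_subset[of _ "{..<2 * m} \<times> {..<2 * m}"]) (auto simp: index_pairs_def)

lemma card_index_pairs: "card (index_pairs m) = m * (2 * m - 1)"
proof -
  have "index_pairs m = (\<lambda>(j, i). (i, j)) ` (SIGMA j:{..<2 * m}. {..<j})"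
    by (auto simp: index_pairs_def image_iff)
  moreover have "inj_on (\<lambda>(j, i). (i, j)) (SIGMA j:{..<2 * m}. {..<j})"
    by (auto simp: inj_on_def)
  ultimately have "card (index_pairs m) = (\<Sum>j<2 * m. j)" by (simp add: card_image)
  also have "\<dots> = m * (2 * m - 1)"
  proof (induction m)
    case (Suc m)
    have "(\<Sum>j<2 * Suc m. j) = (\<Sum>j<2 * m. j) + 2 * m + (2 * m + 1)"
      by (simp add: numeral_2_eq_2)
    also have "\<dots> = Suc m * (2 * Suc m - 1)" using Suc.IH by (cases m) (auto simp: algebra_simps)
    finally show ?case .
  qed simp
  finally show ?thesis .
qed

lemma card_le_mult_of_cover:
  assumes "X \<subseteq> f ` (I \<times> S)" "finite I" "finite S"
  shows "card X \<le> card I * card S"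
proof -
  have "card X \<le> card (f ` (I \<times> S))"
    using assms by (intro card_mono) auto
  also have "\<dots> \<le> card (I \<times> S)" by (rule card_image_le) (simp add: assms)
  finally show ?thesis by (simp add: card_cartesian_product)
qed

lemma insert_pair_inner:
  "insert_pair p True a (length u, length u + length v + 1) (u @ shift_word p v @ t) =
    u @ [(a, False)] @ v @ [(a, True)] @ t"
  by (simp add: insert_pair.simps)

lemma insert_pair_outer:
  "insert_pair p False a (length u, length u + length v + 1) (shift_word p u @ v @ shift_word p t) =
    u @ [(a, True)] @ v @ [(a, False)] @ t"
  by (simp add: insert_pair.simps)

lemma trivial_words_with_eq_insert_pair:
  assumes "2 \<le> p" "w \<in> trivial_words_with p m a hi"
  shows "\<exists>inner ij w'. ij \<in> index_pairs m \<and> w' \<in> trivial_words p (m - 1) a (hi + p - 1) \<and>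
    w = insert_pair p inner a ij w'"
proof -
  have w: "fp_eq p w []" "length w = 2 * m" "\<forall>l\<in>set w. a \<le> fst l \<and> fst l < hi" "\<exists>l\<in>set w. fst l = a"
    using assms(2) by (auto simp: trivial_words_with_def trivial_words_def words_def)
  have shift_range: "\<forall>l\<in>set (shift_word p x). a \<le> fst l \<and> fst l < hi + p - 1"
    if "\<forall>l\<in>set x. a \<le> fst l \<and> fst l < hi" for x
    using that assms(1) by (auto simp: shift_word_def)
  have "\<forall>l\<in>set w. a \<le> fst l" using w(3) by simp
  from trivial_word_decomp[OF assms(1) w(1) this w(4)] show ?thesis
  proof (elim disjE exE conjE)
    fix u v t
    assume split: "w = u @ [(a, False)] @ v @ [(a, True)] @ t" and v: "\<forall>l\<in>set v. a < fst l"
    have "w = insert_pair p True a (length u, length u + length v + 1) (u @ shift_word p v @ t)"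
      using split by (simp only: insert_pair_inner)
    moreover have "(length u, length u + length v + 1) \<in> index_pairs m"
      using w(2) split by (simp add: index_pairs_def)
    moreover have "fp_eq p (u @ shift_word p v @ t) []"
      using w(1) fp_eq_context[OF fp_eq_conj_word[OF assms(1) v], of u t] split
      by (metis append.assoc fp_eq_sym fp_eq_trans)
    moreover have "u @ shift_word p v @ t \<in> words a (hi + p - 1) (2 * (m - 1))"
      using w(2,3) split shift_range[of v] assms(1) by (force simp: words_def)
    ultimately show ?thesis unfolding trivial_words_def by blast
  next
    fix u v t
    assume split: "w = u @ [(a, True)] @ v @ [(a, False)] @ t"
      and u: "\<forall>l\<in>set u. a < fst l" and t: "\<forall>l\<in>set t. a < fst l"
    have "w = insert_pair p False a (length u, length u + length v + 1) (shift_word p u @ v @ shift_word p t)"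
      using split by (simp only: insert_pair_outer)
    moreover have "(length u, length u + length v + 1) \<in> index_pairs m"
      using w(2) split by (simp add: index_pairs_def)
    moreover have "fp_eq p (shift_word p u @ v @ shift_word p t) []"
      using w(1) fp_eq_Nil_outer_pair_iff[OF assms(1) u t, of v] split by simp
    moreover have "shift_word p u @ v @ shift_word p t \<in> words a (hi + p - 1) (2 * (m - 1))"
      using w(2,3) split shift_range[of u] shift_range[of t] assms(1) by (force simp: words_def)
    ultimately show ?thesis unfolding trivial_words_def by blast
  qed
qed

lemma card_trivial_words_with_le:
  assumes "2 \<le> p"
  shows "card (trivial_words_with p m a hi) \<le> 2 * m * (2 * m - 1) * card (trivial_words p (m - 1) a (hi + p - 1))"
proof -
  have "trivial_words_with p m a hi \<subseteq>
      case_prod (\<lambda>(inner, ij). insert_pair p inner a ij) ` ((UNIV \<times> index_pairs m) \<times> trivial_words p (m - 1) a (hi + p - 1))"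
  proof
    fix w assume "w \<in> trivial_words_with p m a hi"
    then obtain inner ij w' where "ij \<in> index_pairs m" "w' \<in> trivial_words p (m - 1) a (hi + p - 1)"
      "w = insert_pair p inner a ij w'"
      using trivial_words_with_eq_insert_pair[OF assms] by blast
    then show "w \<in> case_prod (\<lambda>(inner, ij). insert_pair p inner a ij) `
        ((UNIV \<times> index_pairs m) \<times> trivial_words p (m - 1) a (hi + p - 1))"
      by (intro image_eqI[of _ _ "((inner, ij), w')"]) auto
  qed
  then have "card (trivial_words_with p m a hi) \<le> card ((UNIV :: bool set) \<times> index_pairs m) * card (trivial_words p (m - 1) a (hi + p - 1))"
    by (rule card_le_mult_of_cover) (simp_all add: finite_index_pairs finite_trivial_words)
  then show ?thesis by (simp add: card_cartesian_product card_index_pairs)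
qed

lemma trivial_words_subset_UN_with:
  assumes "1 \<le> m"
  shows "trivial_words p m lo hi \<subseteq> (\<Union>a\<in>{lo..<hi}. trivial_words_with p m a hi)"
proof
  fix w assume w: "w \<in> trivial_words p m lo hi"
  define a where "a = Min (fst ` set w)"
  have "fst ` set w \<noteq> {}" using w assms by (auto simp: trivial_words_def words_def)
  then have "a \<in> fst ` set w" unfolding a_def by (intro Min_in) auto
  moreover have "\<forall>l\<in>set w. a \<le> fst l" unfolding a_def by simp
  ultimately have "a \<in> {lo..<hi}" "w \<in> trivial_words_with p m a hi"
    using w by (auto simp: trivial_words_with_def trivial_words_def words_def)
  then show "w \<in> (\<Union>a\<in>{lo..<hi}. trivial_words_with p m a hi)" by blast
qed

lemma take_mid_drop: "i \<le> k \<Longrightarrow> take i w @ take (k - i) (drop i w) @ drop k w = w"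
  by (metis append.assoc append_take_drop_id le_add_diff_inverse take_add)

lemma unshift_word_bounds:
  assumes "2 \<le> p" "\<forall>l\<in>set x. a + p \<le> fst l \<and> fst l < hi"
  shows "\<forall>l\<in>set (unshift_word p x). a < fst l \<and> fst l < hi"
proof
  fix l assume "l \<in> set (unshift_word p x)"
  then obtain l' where "l' \<in> set x" "l = (fst l' - (p - 1), snd l')"
    unfolding unshift_word_def set_map by blast
  then show "a < fst l \<and> fst l < hi" using assms by fastforce
qed

lemma insert_pair_decomp:
  assumes "2 \<le> p" "(i, j) \<in> index_pairs m" "length w = 2 * (m - 1)"
    and w: "\<forall>l\<in>set w. a + p \<le> fst l \<and> fst l < hi"
  shows "\<exists>U V T. insert_pair p inner a (i, j) w = U @ [(a, \<not> inner)] @ V @ [(a, inner)] @ T \<and>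
    length U = i \<and> length V = j - 1 - i \<and>
    w = (if inner then U @ shift_word p V @ T else shift_word p U @ V @ shift_word p T) \<and>
    (\<forall>l\<in>set (U @ V @ T). a < fst l \<and> fst l < hi)"
proof -
  let ?u = "take i w" and ?v = "take (j - 1 - i) (drop i w)" and ?t = "drop (j - 1) w"
  have "i \<le> j - 1" using assms(2) by (auto simp: index_pairs_def)
  then have split: "w = ?u @ ?v @ ?t" by (simp only: take_mid_drop)
  have len: "length ?u = i" "length ?v = j - 1 - i" using assms(2,3) by (auto simp: index_pairs_def)
  have parts: "\<forall>l\<in>set x. a + p \<le> fst l \<and> fst l < hi" if "x \<in> {?u, ?v, ?t}" for x
    using that w by (auto dest: in_set_takeD in_set_dropD)
  have shift_back: "shift_word p (unshift_word p x) = x" if "x \<in> {?u, ?v, ?t}" for x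
    using parts[OF that] assms(1) by (intro shift_unshift_word) auto
  have bounds: "\<forall>l\<in>set x. a < fst l \<and> fst l < hi" "\<forall>l\<in>set (unshift_word p x). a < fst l \<and> fst l < hi"
    if "x \<in> {?u, ?v, ?t}" for x
    using parts[OF that] unshift_word_bounds[OF assms(1) parts[OF that]] assms(1) by auto
  show ?thesis
  proof (cases inner)
    case True
    have "insert_pair p inner a (i, j) w = ?u @ [(a, \<not> inner)] @ unshift_word p ?v @ [(a, inner)] @ ?t"
      using True by (simp add: insert_pair.simps)
    moreover have "w = (if inner then ?u @ shift_word p (unshift_word p ?v) @ ?t
        else shift_word p ?u @ unshift_word p ?v @ shift_word p ?t)"
      using True split shift_back[of ?v] by simp
    moreover have "\<forall>l\<in>set (?u @ unshift_word p ?v @ ?t). a < fst l \<and> fst l < hi"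
      using bounds[of ?u] bounds[of ?v] bounds[of ?t] by auto
    moreover have "length (unshift_word p ?v) = j - 1 - i" using len by simp
    ultimately show ?thesis using len(1) by blast
  next
    case False
    have "insert_pair p inner a (i, j) w =
        unshift_word p ?u @ [(a, \<not> inner)] @ ?v @ [(a, inner)] @ unshift_word p ?t"
      using False by (simp add: insert_pair.simps)
    moreover have "w = (if inner then unshift_word p ?u @ shift_word p ?v @ unshift_word p ?t
        else shift_word p (unshift_word p ?u) @ ?v @ shift_word p (unshift_word p ?t))"
      using False split shift_back[of ?u] shift_back[of ?t] by simp
    moreover have "\<forall>l\<in>set (unshift_word p ?u @ ?v @ unshift_word p ?t). a < fst l \<and> fst l < hi"
      using bounds[of ?u] bounds[of ?v] bounds[of ?t] by auto
    moreover have "length (unshift_word p ?u) = i" using len by simp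
    ultimately show ?thesis using len(2) by blast
  qed
qed

lemma set_pair_split: "set (U @ [x] @ V @ [y] @ T) = insert x (insert y (set (U @ V @ T)))"
  by auto

lemma insert_pair_mem_trivial_words:
  assumes "2 \<le> p" "a \<in> {lo..<hi}" "ij \<in> index_pairs m" "w \<in> trivial_words p (m - 1) (a + p) hi"
  shows "insert_pair p inner a ij w \<in> trivial_words p m lo hi"
proof -
  obtain i j where ij: "ij = (i, j)" by (cases ij)
  have w: "length w = 2 * (m - 1)" "\<forall>l\<in>set w. a + p \<le> fst l \<and> fst l < hi" "fp_eq p w []"
    using assms(4) by (auto simp: trivial_words_def words_def)
  from insert_pair_decomp[of p i j m w a hi inner] assms(1,3) w obtain U V T where
    split: "insert_pair p inner a ij w = U @ [(a, \<not> inner)] @ V @ [(a, inner)] @ T"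
      and w': "w = (if inner then U @ shift_word p V @ T else shift_word p U @ V @ shift_word p T)"
      and UVT: "\<forall>l\<in>set (U @ V @ T). a < fst l \<and> fst l < hi"
    unfolding ij by auto
  have "1 \<le> m" using assms(3) by (auto simp: index_pairs_def)
  then have "length (insert_pair p inner a ij w) = 2 * m"
    using w(1) w' split by (cases inner) auto
  moreover have "\<forall>l\<in>set (U @ V @ T). lo \<le> fst l \<and> fst l < hi"
  proof
    fix l assume "l \<in> set (U @ V @ T)"
    moreover have "lo \<le> a" using assms(2) by simp
    ultimately show "lo \<le> fst l \<and> fst l < hi" using UVT by fastforce
  qed
  then have "\<forall>l\<in>set (insert_pair p inner a ij w). lo \<le> fst l \<and> fst l < hi"
    unfolding split set_pair_split using assms(2) by simp
  moreover have "fp_eq p (insert_pair p inner a ij w) []"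
  proof (cases inner)
    case True
    then have "fp_eq p (insert_pair p inner a ij w) w"
      using split w' fp_eq_context[OF fp_eq_conj_word[OF assms(1)], of V a U T] UVT by simp
    then show ?thesis using w(3) by (rule fp_eq_trans)
  next
    case False
    then show ?thesis
      using split w' w(3) fp_eq_Nil_outer_pair_iff[OF assms(1), of U a T V] UVT by simp
  qed
  ultimately show ?thesis by (simp add: trivial_words_def words_def)
qed

lemma append_Cons_eq_first_split:
  "u1 @ x1 # r1 = u2 @ x2 # r2 \<Longrightarrow> P x1 \<Longrightarrow> P x2 \<Longrightarrow> \<forall>l\<in>set u1. \<not> P l \<Longrightarrow> \<forall>l\<in>set u2. \<not> P l \<Longrightarrow>
   u1 = u2 \<and> x1 = x2 \<and> r1 = r2"
proof (induction u1 arbitrary: u2)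
  case Nil
  then show ?case by (cases u2) auto
next
  case (Cons y u1)
  then show ?case by (cases u2) auto
qed

lemma insert_pair_inj_on:
  assumes "2 \<le> p"
  shows "inj_on (\<lambda>(a, (inner, ij), w). insert_pair p inner a ij w)
    (SIGMA a:A. (UNIV \<times> index_pairs m) \<times> trivial_words p (m - 1) (a + p) hi)"
proof (rule inj_onI)
  fix x x'
  assume "x \<in> (SIGMA a:A. (UNIV \<times> index_pairs m) \<times> trivial_words p (m - 1) (a + p) hi)"
    "x' \<in> (SIGMA a:A. (UNIV \<times> index_pairs m) \<times> trivial_words p (m - 1) (a + p) hi)"
    "(\<lambda>(a, (inner, ij), w). insert_pair p inner a ij w) x = (\<lambda>(a, (inner, ij), w). insert_pair p inner a ij w) x'"
  then obtain a inner i j w a' inner' i' j' w' where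
    x: "x = (a, (inner, (i, j)), w)" "x' = (a', (inner', (i', j')), w')" and
    mem: "(i, j) \<in> index_pairs m" "w \<in> trivial_words p (m - 1) (a + p) hi"
      "(i', j') \<in> index_pairs m" "w' \<in> trivial_words p (m - 1) (a' + p) hi" and
    eq: "insert_pair p inner a (i, j) w = insert_pair p inner' a' (i', j') w'"
    by (cases x, cases x') auto
  from insert_pair_decomp[of p i j m w a hi inner] assms mem(1,2) obtain U V T where
    d: "insert_pair p inner a (i, j) w = U @ [(a, \<not> inner)] @ V @ [(a, inner)] @ T"
      "length U = i" "length V = j - 1 - i"
      "w = (if inner then U @ shift_word p V @ T else shift_word p U @ V @ shift_word p T)"
      "\<forall>l\<in>set (U @ V @ T). a < fst l"
    by (fastforce simp: trivial_words_def words_def)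
  from insert_pair_decomp[of p i' j' m w' a' hi inner'] assms mem(3,4) obtain U' V' T' where
    d': "insert_pair p inner' a' (i', j') w' = U' @ [(a', \<not> inner')] @ V' @ [(a', inner')] @ T'"
      "length U' = i'" "length V' = j' - 1 - i'"
      "w' = (if inner' then U' @ shift_word p V' @ T' else shift_word p U' @ V' @ shift_word p T')"
      "\<forall>l\<in>set (U' @ V' @ T'). a' < fst l"
    by (fastforce simp: trivial_words_def words_def)
  have min_gen: "\<forall>l\<in>set (U @ [(a, b)] @ V @ [(a, b')] @ T). a \<le> fst l"
    if "\<forall>l\<in>set (U @ V @ T). a < fst l" for a b b' and U V T :: fword
    using that unfolding set_pair_split by (simp add: less_imp_le)
  have e: "U @ [(a, \<not> inner)] @ V @ [(a, inner)] @ T = U' @ [(a', \<not> inner')] @ V' @ [(a', inner')] @ T'"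
    using eq d(1) d'(1) by simp
  have "(a, \<not> inner) \<in> set (U @ [(a, \<not> inner)] @ V @ [(a, inner)] @ T)"
    "(a', \<not> inner') \<in> set (U' @ [(a', \<not> inner')] @ V' @ [(a', inner')] @ T')"
    by simp_all
  then have "(a, \<not> inner) \<in> set (U' @ [(a', \<not> inner')] @ V' @ [(a', inner')] @ T')"
    "(a', \<not> inner') \<in> set (U @ [(a, \<not> inner)] @ V @ [(a, inner)] @ T)"
    unfolding e by simp_all
  then have a: "a' = a"
    using min_gen[OF d(5), of "\<not> inner" inner] min_gen[OF d'(5), of "\<not> inner'" inner'] by fastforce
  have "U = U' \<and> (a, \<not> inner) = (a, \<not> inner') \<and> V @ (a, inner) # T = V' @ (a, inner') # T'"
    using e d(5) d'(5) unfolding a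
    by (intro append_Cons_eq_first_split[where P = "\<lambda>l. fst l = a"]) auto
  moreover from this have "V = V' \<and> (a, inner) = (a, inner') \<and> T = T'"
    using d(5) d'(5) unfolding a
    by (intro append_Cons_eq_first_split[where P = "\<lambda>l. fst l = a"]) auto
  ultimately show "x = x'"
    using d(2-4) d'(2-4) a mem(1,3) x by (auto simp: index_pairs_def)
qed

lemma card_trivial_words_ge:
  assumes "2 \<le> p"
  shows "(\<Sum>a\<in>{lo..<hi}. 2 * m * (2 * m - 1) * card (trivial_words p (m - 1) (a + p) hi))
    \<le> card (trivial_words p m lo hi)"
proof -
  let ?D = "SIGMA a:{lo..<hi}. ((UNIV :: bool set) \<times> index_pairs m) \<times> trivial_words p (m - 1) (a + p) hi"
  let ?f = "\<lambda>(a, (inner, ij), w). insert_pair p inner a ij w"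
  have "(\<Sum>a\<in>{lo..<hi}. 2 * m * (2 * m - 1) * card (trivial_words p (m - 1) (a + p) hi)) = card ?D"
    by (simp add: card_SigmaI finite_index_pairs finite_trivial_words card_cartesian_product
        card_index_pairs mult.assoc)
  also have "\<dots> = card (?f ` ?D)"
    using insert_pair_inj_on[OF assms] by (simp add: card_image)
  also have "\<dots> \<le> card (trivial_words p m lo hi)"
    using insert_pair_mem_trivial_words[OF assms] by (intro card_mono finite_trivial_words) fastforce
  finally show ?thesis .
qed

section \<open>Asymptotics of the number of trivial words\<close>

lemma power_increment_le: "((x::nat) + 1) ^ (j + 1) \<le> x ^ (j + 1) + (j + 1) * (x + 1) ^ j"
proof (induction j)
  case (Suc j)
  have "(x + 1) ^ (Suc j + 1) = (x + 1) * (x + 1) ^ (j + 1)" by simp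
  also have "\<dots> \<le> (x + 1) * (x ^ (j + 1) + (j + 1) * (x + 1) ^ j)"
    using Suc by (intro mult_left_mono) auto
  also have "\<dots> = x ^ (Suc j + 1) + x ^ (j + 1) + (j + 1) * (x + 1) ^ (j + 1)"
    by (simp add: algebra_simps)
  also have "\<dots> \<le> x ^ (Suc j + 1) + (Suc j + 1) * (x + 1) ^ Suc j"
    using power_mono[of x "x + 1" "j + 1"] by simp
  finally show ?case .
qed simp

lemma power_increment_ge: "(x::nat) ^ (j + 1) + (j + 1) * x ^ j \<le> (x + 1) ^ (j + 1)"
proof (induction j)
  case (Suc j)
  have "x ^ (Suc j + 1) + (Suc j + 1) * x ^ Suc j \<le> (x + 1) * (x ^ (j + 1) + (j + 1) * x ^ j)"
    by (simp add: algebra_simps)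
  also have "\<dots> \<le> (x + 1) * (x + 1) ^ (j + 1)" using Suc by (intro mult_left_mono) auto
  finally show ?case by simp
qed simp

lemma power_sum_ge: "(L - B) ^ (j + 1) \<le> (j + 1) * (\<Sum>t = 1..L. (t - B) ^ j)"
proof (induction L)
  case (Suc L)
  have "(Suc L - B) ^ (j + 1) \<le> (L - B) ^ (j + 1) + (j + 1) * (Suc L - B) ^ j"
    using power_increment_le[of "L - B" j] by (cases "B \<le> L") (simp_all add: Suc_diff_le)
  then show ?case using Suc by (simp add: algebra_simps)
qed simp

lemma power_sum_le: "(j + 1) * (\<Sum>t = 1..L. (t + C) ^ j) \<le> (L + C + 1) ^ (j + 1)"
proof (induction L)
  case (Suc L)
  have "(j + 1) * (\<Sum>t = 1..Suc L. (t + C) ^ j) \<le> (L + C + 1) ^ (j + 1) + (j + 1) * (L + C + 1) ^ j"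
    using Suc by (simp add: algebra_simps)
  also have "\<dots> \<le> (Suc L + C + 1) ^ (j + 1)" using power_increment_ge[of "L + C + 1" j] by simp
  finally show ?case .
qed simp

lemma sum_reflect_atLeastLessThan:
  fixes f :: "nat \<Rightarrow> nat"
  shows "(\<Sum>a = lo..<hi. f (hi - a)) = (\<Sum>t = 1..hi - lo. f t)"
  by (rule sum.reindex_bij_witness[of _ "\<lambda>t. hi - t" "\<lambda>a. hi - a"]) auto

text \<open>The (2m - 1)!! pairings of 2m positions, each pair carrying one of 2 orientations.\<close>

definition pairing_count :: "nat \<Rightarrow> nat" where
  "pairing_count m = 2 ^ m * dfact (2 * m - 1)"

lemma pairing_count_Suc:
  "Suc m * pairing_count (Suc m) = 2 * Suc m * (2 * Suc m - 1) * pairing_count m"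
proof -
  have "dfact (2 * Suc m - 1) = (2 * m + 1) * dfact (2 * m - 1)"
    by (cases m) (simp_all add: numeral_2_eq_2)
  then show ?thesis by (simp add: pairing_count_def algebra_simps)
qed

lemma card_trivial_words_lower:
  assumes "2 \<le> p"
  shows "pairing_count m * (hi - lo - m * p) ^ m \<le> card (trivial_words p m lo hi)"
proof (induction m arbitrary: lo hi)
  case 0
  have "trivial_words p 0 lo hi = {[]}" by (auto simp: trivial_words_def words_def)
  then show ?case by (simp add: pairing_count_def)
next
  case (Suc m)
  define K where "K = 2 * Suc m * (2 * Suc m - 1)"
  have "(\<Sum>t = 1..hi - lo. (t - Suc m * p) ^ m) = (\<Sum>a = lo..<hi. (hi - (a + p) - m * p) ^ m)"
    using sum_reflect_atLeastLessThan[where f = "\<lambda>t. (t - Suc m * p) ^ m"] by (simp add: diff_diff_add add.assoc)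
  then have "K * pairing_count m * (\<Sum>t = 1..hi - lo. (t - Suc m * p) ^ m) =
      (\<Sum>a = lo..<hi. K * (pairing_count m * (hi - (a + p) - m * p) ^ m))"
    by (simp add: sum_distrib_left mult.assoc)
  also have "\<dots> \<le> (\<Sum>a = lo..<hi. K * card (trivial_words p m (a + p) hi))"
    by (intro sum_mono mult_left_mono Suc.IH) simp
  also have "\<dots> \<le> card (trivial_words p (Suc m) lo hi)"
    using card_trivial_words_ge[OF assms, where m = "Suc m" and lo = lo and hi = hi] unfolding K_def by simp
  finally have "Suc m * (K * pairing_count m * (\<Sum>t = 1..hi - lo. (t - Suc m * p) ^ m))
      \<le> Suc m * card (trivial_words p (Suc m) lo hi)"
    by (rule mult_le_mono2)
  then have upper: "K * pairing_count m * (Suc m * (\<Sum>t = 1..hi - lo. (t - Suc m * p) ^ m))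
      \<le> Suc m * card (trivial_words p (Suc m) lo hi)"
    by (simp only: mult_ac)
  have "(hi - lo - Suc m * p) ^ Suc m \<le> Suc m * (\<Sum>t = 1..hi - lo. (t - Suc m * p) ^ m)"
    using power_sum_ge[of "hi - lo" "Suc m * p" m] by simp
  then have "K * pairing_count m * (hi - lo - Suc m * p) ^ Suc m
      \<le> K * pairing_count m * (Suc m * (\<Sum>t = 1..hi - lo. (t - Suc m * p) ^ m))"
    by (rule mult_le_mono2)
  then have "Suc m * (pairing_count (Suc m) * (hi - lo - Suc m * p) ^ Suc m)
      \<le> Suc m * card (trivial_words p (Suc m) lo hi)"
    using upper unfolding mult.assoc[symmetric] pairing_count_Suc K_def[symmetric] by (rule le_trans)
  then show ?case by (simp only: Suc_mult_le_cancel1)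
qed

lemma card_trivial_words_upper:
  assumes "2 \<le> p"
  shows "card (trivial_words p m lo hi) \<le> pairing_count m * (hi - lo + m * p) ^ m"
proof (induction m arbitrary: lo hi)
  case 0
  have "trivial_words p 0 lo hi = {[]}" by (auto simp: trivial_words_def words_def)
  then show ?case by (simp add: pairing_count_def)
next
  case (Suc m)
  define K where "K = 2 * Suc m * (2 * Suc m - 1)"
  define C where "C = p - 1 + m * p"
  have "card (trivial_words p (Suc m) lo hi) \<le> card (\<Union>a\<in>{lo..<hi}. trivial_words_with p (Suc m) a hi)"
    using trivial_words_subset_UN_with[of "Suc m" p lo hi]
    by (intro card_mono) (auto simp: trivial_words_with_def finite_trivial_words)
  also have "\<dots> \<le> (\<Sum>a = lo..<hi. card (trivial_words_with p (Suc m) a hi))"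
    by (rule card_UN_le) simp
  also have "\<dots> \<le> (\<Sum>a = lo..<hi. K * card (trivial_words p m a (hi + p - 1)))"
  proof (rule sum_mono)
    fix a
    show "card (trivial_words_with p (Suc m) a hi) \<le> K * card (trivial_words p m a (hi + p - 1))"
      using card_trivial_words_with_le[OF assms, of "Suc m" a hi] by (simp add: K_def)
  qed
  also have "\<dots> \<le> (\<Sum>a = lo..<hi. K * (pairing_count m * (hi - a + C) ^ m))"
  proof (intro sum_mono mult_left_mono)
    fix a assume "a \<in> {lo..<hi}"
    then have "hi + p - 1 - a + m * p = hi - a + C" using assms by (simp add: C_def)
    then show "card (trivial_words p m a (hi + p - 1)) \<le> pairing_count m * (hi - a + C) ^ m"
      using Suc.IH[of a "hi + p - 1"] by (simp add: add.assoc)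
  qed simp
  also have "\<dots> = K * pairing_count m * (\<Sum>t = 1..hi - lo. (t + C) ^ m)"
    unfolding sum_reflect_atLeastLessThan[where f = "\<lambda>t. (t + C) ^ m", symmetric]
    by (simp add: sum_distrib_left mult.assoc)
  finally have "Suc m * card (trivial_words p (Suc m) lo hi)
      \<le> Suc m * (K * pairing_count m * (\<Sum>t = 1..hi - lo. (t + C) ^ m))"
    by (rule mult_le_mono2)
  also have "\<dots> = K * pairing_count m * (Suc m * (\<Sum>t = 1..hi - lo. (t + C) ^ m))"
    by (simp only: mult_ac)
  also have "\<dots> \<le> K * pairing_count m * (hi - lo + Suc m * p) ^ Suc m"
    using power_sum_le[where j = m and L = "hi - lo" and C = C] assms by (intro mult_left_mono) (simp_all add: C_def)
  also have "\<dots> = Suc m * (pairing_count (Suc m) * (hi - lo + Suc m * p) ^ Suc m)"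
    unfolding K_def by (simp only: mult.assoc[symmetric] pairing_count_Suc)
  finally show ?case by (simp only: Suc_mult_le_cancel1)
qed

lemma tendsto_shifted_ratio_power: "(\<lambda>n. ((real n + c) / real n) ^ k) \<longlonglongrightarrow> 1"
proof -
  have "(\<lambda>n. (1 + c / real n) ^ k) \<longlonglongrightarrow> (1 + 0) ^ k"
    by (intro tendsto_intros lim_const_over_n)
  moreover have "\<forall>\<^sub>F n in sequentially. (1 + c / real n) ^ k = ((real n + c) / real n) ^ k"
    using eventually_gt_at_top[of 0] by eventually_elim (simp add: field_simps)
  ultimately show ?thesis by (simp add: Lim_transform_eventually)
qed

lemma card_trivial_words_ratio_ge:
  assumes "2 \<le> p" "m * p \<le> n"
  shows "real (pairing_count m) * ((real n - real (m * p)) / real n) ^ m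
    \<le> real (card (trivial_words p m 0 n)) / real n ^ m"
proof -
  have "real (pairing_count m * (n - m * p) ^ m) \<le> real (card (trivial_words p m 0 n))"
    using card_trivial_words_lower[OF assms(1), where m = m and lo = 0 and hi = n]
    by (simp only: of_nat_le_iff diff_zero)
  moreover have "real (n - m * p) = real n - real (m * p)" using assms(2) by (rule of_nat_diff)
  ultimately have "real (pairing_count m) * (real n - real (m * p)) ^ m \<le> real (card (trivial_words p m 0 n))"
    by (simp only: of_nat_mult of_nat_power)
  then show ?thesis unfolding power_divide times_divide_eq_right by (rule divide_right_mono) simp
qed

lemma card_trivial_words_ratio_le:
  assumes "2 \<le> p"
  shows "real (card (trivial_words p m 0 n)) / real n ^ m
    \<le> real (pairing_count m) * ((real n + real (m * p)) / real n) ^ m"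
proof -
  have "real (card (trivial_words p m 0 n)) \<le> real (pairing_count m * (n + m * p) ^ m)"
    using card_trivial_words_upper[OF assms, where m = m and lo = 0 and hi = n]
    by (simp only: of_nat_le_iff diff_zero)
  then have "real (card (trivial_words p m 0 n)) \<le> real (pairing_count m) * (real n + real (m * p)) ^ m"
    by (simp only: of_nat_mult of_nat_power of_nat_add)
  then show ?thesis unfolding power_divide times_divide_eq_right by (rule divide_right_mono) simp
qed

lemma card_trivial_words_asymp:
  assumes "2 \<le> p"
  shows "(\<lambda>n. real (card (trivial_words p m 0 n)) / real n ^ m) \<longlonglongrightarrow> real (pairing_count m)"
proof (rule tendsto_sandwich)
  let ?c = "real (pairing_count m)" and ?A = "real (m * p)"
  show "\<forall>\<^sub>F n in sequentially. ?c * ((real n - ?A) / real n) ^ m \<le> real (card (trivial_words p m 0 n)) / real n ^ m"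
    using eventually_ge_at_top[of "m * p"] by eventually_elim (rule card_trivial_words_ratio_ge[OF assms])
  show "\<forall>\<^sub>F n in sequentially. real (card (trivial_words p m 0 n)) / real n ^ m \<le> ?c * ((real n + ?A) / real n) ^ m"
    by (intro always_eventually allI card_trivial_words_ratio_le[OF assms])
  have "(\<lambda>n. ?c * ((real n + - ?A) / real n) ^ m) \<longlonglongrightarrow> ?c * 1"
    by (intro tendsto_mult_left tendsto_shifted_ratio_power)
  then show "(\<lambda>n. ?c * ((real n - ?A) / real n) ^ m) \<longlonglongrightarrow> ?c"
    by (simp only: diff_conv_add_uminus mult_1_right)
  have "(\<lambda>n. ?c * ((real n + ?A) / real n) ^ m) \<longlonglongrightarrow> ?c * 1"
    by (intro tendsto_mult_left tendsto_shifted_ratio_power)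
  then show "(\<lambda>n. ?c * ((real n + ?A) / real n) ^ m) \<longlonglongrightarrow> ?c"
    by (simp only: mult_1_right)
qed

section \<open>Moments of s_n\<close>

definition word_count :: "nat \<Rightarrow> fword set \<Rightarrow> fword set \<Rightarrow> complex" where
  "word_count p W C = (\<Sum>w\<in>W. if fp_class p w = C then 1 else 0)"

lemma word_count_support: "{C. c * word_count p W C \<noteq> 0} \<subseteq> fp_class p ` W"
proof
  fix C assume "C \<in> {C. c * word_count p W C \<noteq> 0}"
  then have "word_count p W C \<noteq> 0" by simp
  then show "C \<in> fp_class p ` W"
  proof (rule contrapos_np)
    assume "C \<notin> fp_class p ` W"
    then show "word_count p W C = 0" unfolding word_count_def by (auto intro!: sum.neutral)
  qed
qed

lemma sum_count_fibres:
  fixes F :: "'b \<Rightarrow> 'c::comm_semiring_1"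
  assumes "finite S" "finite W" "g ` W \<subseteq> S"
  shows "(\<Sum>A\<in>S. (\<Sum>w\<in>W. if g w = A then 1 else 0) * F A) = (\<Sum>w\<in>W. F (g w))"
proof -
  have "(\<Sum>A\<in>S. (\<Sum>w\<in>W. if g w = A then 1 else 0) * F A) = (\<Sum>A\<in>S. \<Sum>w\<in>W. if A = g w then F A else 0)"
    by (auto simp: sum_distrib_right intro!: sum.cong)
  also have "\<dots> = (\<Sum>w\<in>W. \<Sum>A\<in>S. if A = g w then F A else 0)" by (rule sum.swap)
  also have "\<dots> = (\<Sum>w\<in>W. F (g w))" using assms by (intro sum.cong) (auto simp: sum.delta)
  finally show ?thesis .
qed

lemma sum_word_count:
  assumes "finite S" "finite W" "fp_class p ` W \<subseteq> S"
  shows "(\<Sum>A\<in>S. word_count p W A * h A) = (\<Sum>w\<in>W. h (fp_class p w))"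
  unfolding word_count_def using assms by (rule sum_count_fibres)

lemma fp_conv_eq_sum:
  assumes "finite SA" "finite SB" "{A. f A \<noteq> 0} \<subseteq> SA" "{B. g B \<noteq> 0} \<subseteq> SB"
  shows "fp_conv p f g C = (\<Sum>A\<in>SA. \<Sum>B\<in>SB. if fp_mult p A B = C then f A * g B else 0)"
proof -
  have "fp_conv p f g C = (\<Sum>A\<in>{A. f A \<noteq> 0}. \<Sum>B\<in>SB. if fp_mult p A B = C then f A * g B else 0)"
    unfolding fp_conv_def using assms(2,4) by (intro sum.cong refl sum.mono_neutral_left) auto
  also have "\<dots> = (\<Sum>A\<in>SA. \<Sum>B\<in>SB. if fp_mult p A B = C then f A * g B else 0)"
  proof (rule sum.mono_neutral_left)
    show "\<forall>A\<in>SA - {A. f A \<noteq> 0}. (\<Sum>B\<in>SB. if fp_mult p A B = C then f A * g B else 0) = 0"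
      by (simp add: sum.neutral)
  qed (use assms(1,3) in auto)
  finally show ?thesis .
qed

lemma fp_conv_word_count:
  assumes "finite U" "finite V"
  shows "fp_conv p (\<lambda>C. x * word_count p U C) (\<lambda>C. y * word_count p V C) C =
    x * y * (\<Sum>u\<in>U. \<Sum>v\<in>V. if fp_class p (u @ v) = C then 1 else 0)"
proof -
  have "fp_conv p (\<lambda>C. x * word_count p U C) (\<lambda>C. y * word_count p V C) C =
      (\<Sum>A\<in>fp_class p ` U. \<Sum>B\<in>fp_class p ` V.
        if fp_mult p A B = C then x * word_count p U A * (y * word_count p V B) else 0)"
    using assms by (intro fp_conv_eq_sum word_count_support) auto
  also have "\<dots> = x * y * (\<Sum>A\<in>fp_class p ` U. word_count p U A *
      (\<Sum>B\<in>fp_class p ` V. word_count p V B * (if fp_mult p A B = C then 1 else 0)))"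
    by (simp add: sum_distrib_left) (intro sum.cong refl; simp add: mult_ac)
  also have "\<dots> = x * y * (\<Sum>u\<in>U. \<Sum>v\<in>V. if fp_mult p (fp_class p u) (fp_class p v) = C then 1 else 0)"
    using assms by (simp add: sum_word_count)
  finally show ?thesis by (simp add: fp_mult_class)
qed

lemma sum_words_Suc:
  "(\<Sum>w\<in>words lo hi (Suc d). F w) = (\<Sum>u\<in>words lo hi 1. \<Sum>v\<in>words lo hi d. F (u @ v))"
proof -
  have "(\<Sum>w\<in>words lo hi (Suc d). F w) = (\<Sum>(u, v)\<in>words lo hi 1 \<times> words lo hi d. F (u @ v))"
  proof (rule sum.reindex_bij_witness[where i = "\<lambda>(u, v). u @ v" and j = "\<lambda>w. (take 1 w, drop 1 w)"])
    fix w assume w: "w \<in> words lo hi (Suc d)"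
    then show "(\<lambda>(u, v). u @ v) (take 1 w, drop 1 w) = w" by simp
    show "(take 1 w, drop 1 w) \<in> words lo hi 1 \<times> words lo hi d"
      using w by (auto simp: words_def dest: in_set_takeD in_set_dropD)
    show "(\<lambda>(u, v). F (u @ v)) (take 1 w, drop 1 w) = F w" by simp
  next
    fix uv assume uv: "uv \<in> words lo hi 1 \<times> words lo hi d"
    then obtain u v where "uv = (u, v)" "length u = 1" "u \<in> words lo hi 1" "v \<in> words lo hi d"
      by (auto simp: words_def)
    then show "(take 1 ((\<lambda>(u, v). u @ v) uv), drop 1 ((\<lambda>(u, v). u @ v) uv)) = uv"
      "(\<lambda>(u, v). u @ v) uv \<in> words lo hi (Suc d)"
      by (auto simp: words_def)
  qed
  then show ?thesis by (simp add: sum.cartesian_product)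
qed

lemma sum_words_1: "(\<Sum>w\<in>words 0 n 1. F w) = (\<Sum>i<n. F [(i, True)] + F [(i, False)])"
proof -
  have "words 0 n 1 = (\<lambda>l. [l]) ` ({..<n} \<times> UNIV)"
    by (auto simp: words_def length_Suc_conv image_iff)
  moreover have "inj_on (\<lambda>l. [l]) ({..<n} \<times> (UNIV :: bool set))" by (simp add: inj_on_def)
  ultimately have "(\<Sum>w\<in>words 0 n 1. F w) = (\<Sum>i<n. \<Sum>b\<in>UNIV. F [(i, b)])"
    by (simp add: sum.reindex sum.cartesian_product')
  then show ?thesis by (simp add: UNIV_bool add.commute)
qed

lemma fp_s_word_count:
  "fp_s p n = (\<lambda>C. inverse (complex_of_real (sqrt (2 * real n))) * word_count p (words 0 n 1) C)"
proof
  fix C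
  have "fp_s p n C = (\<Sum>i<n. fp_basis p [(i, True)] C + fp_basis p [(i, False)] C) /
      complex_of_real (sqrt 2) / complex_of_real (sqrt (real n))"
    by (simp add: fp_s_def fp_a_def sum_divide_distrib)
  also have "(\<Sum>i<n. fp_basis p [(i, True)] C + fp_basis p [(i, False)] C) = word_count p (words 0 n 1) C"
    unfolding word_count_def sum_words_1 by (simp add: fp_basis_def eq_commute)
  finally show "fp_s p n C = inverse (complex_of_real (sqrt (2 * real n))) * word_count p (words 0 n 1) C"
    by (simp add: real_sqrt_mult divide_inverse inverse_mult_distrib mult_ac)
qed

lemma fp_pow_fp_s:
  "fp_pow p (fp_s p n) d = (\<lambda>C. inverse (complex_of_real (sqrt (2 * real n))) ^ d * word_count p (words 0 n d) C)"
proof (induction d)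
  case 0
  have "words 0 n 0 = {[]}" by (auto simp: words_def)
  then have "word_count p (words 0 n 0) C = fp_basis p [] C" for C
    by (cases "C = fp_class p []") (auto simp: word_count_def fp_basis_def)
  then show ?case by (simp add: fun_eq_iff)
next
  case (Suc d)
  let ?q = "inverse (complex_of_real (sqrt (2 * real n)))"
  show ?case
  proof
    fix C
    have "fp_pow p (fp_s p n) (Suc d) C =
        ?q * ?q ^ d * (\<Sum>u\<in>words 0 n 1. \<Sum>v\<in>words 0 n d. if fp_class p (u @ v) = C then 1 else 0)"
      unfolding fp_pow.simps Suc.IH unfolding fp_s_word_count
      by (rule fp_conv_word_count[OF finite_words finite_words])
    also have "(\<Sum>u\<in>words 0 n 1. \<Sum>v\<in>words 0 n d. if fp_class p (u @ v) = C then 1 else 0) =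
        word_count p (words 0 n (Suc d)) C"
      unfolding word_count_def by (rule sum_words_Suc[symmetric])
    finally show "fp_pow p (fp_s p n) (Suc d) C = ?q ^ Suc d * word_count p (words 0 n (Suc d)) C"
      by (simp only: power_Suc)
  qed
qed

lemma fp_trace_fp_pow_fp_s:
  "fp_trace p (fp_pow p (fp_s p n) d) =
    inverse (complex_of_real (sqrt (2 * real n))) ^ d * of_nat (card {w \<in> words 0 n d. fp_eq p w []})"
proof -
  have "word_count p (words 0 n d) (fp_class p []) = (\<Sum>w\<in>words 0 n d. if fp_eq p w [] then 1 else 0)"
    unfolding word_count_def fp_class_eq_iff ..
  also have "\<dots> = (\<Sum>w\<in>{w \<in> words 0 n d. fp_eq p w []}. 1)"
    by (rule sum.inter_filter[symmetric]) (rule finite_words)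
  also have "\<dots> = of_nat (card {w \<in> words 0 n d. fp_eq p w []})" by simp
  finally have trivial_count: "word_count p (words 0 n d) (fp_class p []) =
    of_nat (card {w \<in> words 0 n d. fp_eq p w []})" .
  show ?thesis unfolding fp_trace_def fp_pow_fp_s trivial_count ..
qed

lemma fp_trace_even_moment:
  "fp_trace p (fp_pow p (fp_s p n) (2 * m)) =
    complex_of_real (real (card (trivial_words p m 0 n)) / real n ^ m / 2 ^ m)"
proof -
  have "inverse (complex_of_real (sqrt (2 * real n))) ^ (2 * m) =
      inverse (complex_of_real (sqrt (2 * real n) ^ 2)) ^ m"
    by (simp only: power_mult power_inverse of_real_power)
  also have "\<dots> = complex_of_real (inverse (2 * real n) ^ m)"
    by (simp only: real_sqrt_pow2[of "2 * real n"] of_nat_0_le_iff mult_nonneg_nonneg zero_le_numeral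
        of_real_power[symmetric] of_real_inverse[symmetric])
  finally have scale: "inverse (complex_of_real (sqrt (2 * real n))) ^ (2 * m) =
    complex_of_real (inverse (2 * real n) ^ m)" .
  have "fp_trace p (fp_pow p (fp_s p n) (2 * m)) =
      complex_of_real (inverse (2 * real n) ^ m) * complex_of_real (real (card (trivial_words p m 0 n)))"
    unfolding fp_trace_fp_pow_fp_s trivial_words_def of_real_of_nat_eq scale ..
  also have "\<dots> = complex_of_real (real (card (trivial_words p m 0 n)) / real n ^ m / 2 ^ m)"
  proof -
    have "inverse (2 * real n) ^ m * real (card (trivial_words p m 0 n)) =
        real (card (trivial_words p m 0 n)) / (real n ^ m * 2 ^ m)"
      by (simp only: power_inverse power_mult_distrib divide_inverse mult.commute)
    then show ?thesis by (simp only: of_real_mult[symmetric] divide_divide_eq_left)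
  qed
  finally show ?thesis .
qed

lemma fp_trace_odd_moment:
  assumes "odd d"
  shows "fp_trace p (fp_pow p (fp_s p n) d) = 0"
proof -
  have no_trivial: "{w \<in> words 0 n d. fp_eq p w []} = {}"
  proof (intro equals0I, elim CollectE conjE)
    fix w assume "w \<in> words 0 n d" "fp_eq p w []"
    then have "length w = d" "even (length w)"
      using fp_eq_even_length[of p w "[]"] by (simp_all add: words_def)
    then show False using assms by simp
  qed
  then show ?thesis unfolding fp_trace_fp_pow_fp_s no_trivial by simp
qed

theorem theorem1:
  fixes p d :: nat
  assumes "p \<ge> 2"
  shows "(\<lambda>n. fp_trace p (fp_pow p (fp_s p n) d)) \<longlonglongrightarrow>
           (if even d then of_nat (dfact (d - 1)) else 0)"
proof (cases "even d")
  case True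
  then obtain m where d: "d = 2 * m" ..
  have "(\<lambda>n. real (card (trivial_words p m 0 n)) / real n ^ m / 2 ^ m) \<longlonglongrightarrow> real (pairing_count m) / 2 ^ m"
    by (rule tendsto_divide[OF card_trivial_words_asymp[OF assms] tendsto_const]) simp
  moreover have "real (pairing_count m) / 2 ^ m = real (dfact (d - 1))"
    by (simp add: pairing_count_def d)
  ultimately have "(\<lambda>n. real (card (trivial_words p m 0 n)) / real n ^ m / 2 ^ m) \<longlonglongrightarrow> real (dfact (d - 1))"
    by (simp only:)
  then have "(\<lambda>n. complex_of_real (real (card (trivial_words p m 0 n)) / real n ^ m / 2 ^ m))
      \<longlonglongrightarrow> complex_of_real (real (dfact (d - 1)))"
    by (rule tendsto_of_real)
  moreover have "(\<lambda>n. fp_trace p (fp_pow p (fp_s p n) d)) =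
      (\<lambda>n. complex_of_real (real (card (trivial_words p m 0 n)) / real n ^ m / 2 ^ m))"
    unfolding d by (simp only: fp_trace_even_moment)
  moreover have "(if even d then of_nat (dfact (d - 1)) else 0) = complex_of_real (real (dfact (d - 1)))"
    using True by simp
  ultimately show ?thesis by (simp only:)
next
  case False
  then have "(\<lambda>n. fp_trace p (fp_pow p (fp_s p n) d)) = (\<lambda>n. 0)"
    by (intro ext fp_trace_odd_moment)
  then show ?thesis using False by simp
qed

end
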